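(* Let $\mathrm{SG}(n)$ denote the Sprague--Grundy value of a pile of $n$ tokens in the game $i\textsc{-Mark}(\{1\},\{2,3\})$. For every integer $n>3$ there exists an integer $i$ with $1\le i\le 49$ and $i\le n$ such that $\mathrm{SG}(n-i)=2$.
   Context: In the impartial game $i\textsc{-Mark}(\{1\},\{2,3\})$, played on a single pile of $n\ge0$ tokens, a move replaces $n$ by $n-1$ (if $n\ge 1$), or by $n/2$ if $n>0$ is even, or by $n/3$ if $n>0$ is divisible by $3$. The Sprague--Grundy value is defined recursively by $\mathrm{SG}(n)=\mathrm{mex}\{\mathrm{SG}(w): w \text{ an option of } n\}$, where $\mathrm{mex}(T)$ is the smallest nonnegative integer not in $T$. *)

theory Defs
  imports Main
begin

definition mex :: "nat set \<Rightarrow> nat" where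
  "mex T = (LEAST k. k \<notin> T)"

definition opts :: "nat \<Rightarrow> nat set" where
  "opts n = {w. (n \<ge> 1 \<and> w = n - 1) \<or> (n > 0 \<and> 2 dvd n \<and> w = n div 2)
                \<or> (n > 0 \<and> 3 dvd n \<and> w = n div 3)}"

function SG :: "nat \<Rightarrow> nat" where
  "SG n = mex (SG ` opts n)"
  by auto
termination
proof (relation "measure id")
  show "wf (measure id)" by simp
next
  fix n w assume "w \<in> opts n"
  then show "(w, n) \<in> measure id" by (auto simp: opts_def)
qed

declare SG.simps [simp del]

end

theory Submission
  imports Defs
begin

(* A pile has at most the options n - 1, n/2 and n/3, so the values on a short run of consecutive
   piles are determined, each as a mex of at most three values, by a few values near half and a
   third of the run. For the run 36B+14, ..., 36B+21 the divisibility by 2 and 3 of all piles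
   involved is independent of B, and a case analysis shows that the run contains the value 2,
   using about the unknown values only SG(18B+7) <= 1 (its single option is 18B+6) and
   SG(9B+5) /= SG(9B+4). These runs are 36 apart, so every n > 52 has one within distance 49
   below it; for 3 < n <= 52 the pile 3, of value 2, is close enough. *)

lemma mex_eqI: "k \<notin> T \<Longrightarrow> (\<And>j. j < k \<Longrightarrow> j \<in> T) \<Longrightarrow> mex T = k"
  unfolding mex_def by (rule Least_equality) (auto simp: not_less[symmetric])

lemma mex_notin: "finite T \<Longrightarrow> mex T \<notin> T"
  unfolding mex_def by (rule LeastI_ex) (simp add: ex_new_if_finite)

lemma mex_singleton: "mex {a} = (if a = 0 then 1 else 0)"
  by (rule mex_eqI) (auto split: if_splits)

lemma mex_pair: "mex {a, b} = (if a \<noteq> 0 \<and> b \<noteq> 0 then 0 else if a \<noteq> 1 \<and> b \<noteq> 1 then 1 else 2)"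
  by (rule mex_eqI) (auto split: if_splits simp: less_Suc_eq numeral_2_eq_2)

lemma mex_triple: "mex {a, b, c} = (if a \<noteq> 0 \<and> b \<noteq> 0 \<and> c \<noteq> 0 then 0
   else if a \<noteq> 1 \<and> b \<noteq> 1 \<and> c \<noteq> 1 then 1
   else if a \<noteq> 2 \<and> b \<noteq> 2 \<and> c \<noteq> 2 then 2 else 3)"
  by (rule mex_eqI) (auto split: if_splits simp: less_Suc_eq numeral_2_eq_2 numeral_3_eq_3)

(* x_j and y_j stand for SG(36B+14+j) and SG(18B+7+j); a, q, r, s, g, k for the values at
   36B+13, 12B+5, 9B+4, 6B+3, 12B+6 and 9B+5. *)
lemma mex_window_contains_two:
  fixes a q r s g k y0 y1 y2 y3 x0 x1 x2 x3 x4 x5 x6 x7 :: nat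
  assumes "y0 \<le> 1" and "k \<noteq> r"
    and y1: "y1 = mex {y0, r}" and y2: "y2 = mex {y1, s}" and y3: "y3 = mex {y2, k}"
    and x0: "x0 = mex {a, y0}" and x1: "x1 = mex {x0, q}" and x2: "x2 = mex {x1, y1}"
    and x3: "x3 = mex {x2}" and x4: "x4 = mex {x3, y2, g}" and x5: "x5 = mex {x4}"
    and x6: "x6 = mex {x5, y3}" and x7: "x7 = mex {x6, mex {g}}"
  shows "2 \<in> {x0, x1, x2, x3, x4, x5, x6, x7}"
proof (rule ccontr)
  assume "2 \<notin> {x0, x1, x2, x3, x4, x5, x6, x7}"
  then have no2: "x0 \<noteq> 2" "x1 \<noteq> 2" "x2 \<noteq> 2" "x4 \<noteq> 2" "x6 \<noteq> 2" "x7 \<noteq> 2"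
    by auto
  consider "x0 = 0" "y0 = 1" | "x0 = 1" "y0 = 0"
    using x0 no2 \<open>y0 \<le> 1\<close> by (auto simp: mex_pair split: if_splits)
  then show False
  proof cases
    case 1
    then have "x1 = 1" using x1 no2 by (auto simp: mex_pair split: if_splits)
    then have "x2 = 0" "y1 \<noteq> 0" using x2 no2 by (auto simp: mex_pair split: if_splits)
    then have "r = 0" "y1 = 2" using y1 \<open>y0 = 1\<close> by (auto simp: mex_pair split: if_splits)
    then have "y2 \<noteq> 2" using y2 by (auto simp: mex_pair)
    have "x3 = 1" using x3 \<open>x2 = 0\<close> by (simp add: mex_singleton)
    then consider "x4 = 0" "y2 \<noteq> 0" | "x4 = 3" "g = 2"
      using x4 no2 \<open>y2 \<noteq> 2\<close> by (auto simp: mex_triple split: if_splits)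
    then show False
    proof cases
      case 1
      then show False
        using x5 x6 y3 no2 \<open>k \<noteq> r\<close> \<open>r = 0\<close> by (auto simp: mex_singleton mex_pair)
    next
      case 2
      then show False
        using x5 x6 x7 no2 by (auto simp: mex_singleton mex_pair split: if_splits)
    qed
  next
    case 2
    then have "x1 = 0" using x1 no2 by (auto simp: mex_pair split: if_splits)
    then have "x2 = 1" "y1 \<noteq> 1" using x2 no2 by (auto simp: mex_pair split: if_splits)
    then have "r = 1" "y1 = 2" using y1 \<open>y0 = 0\<close> by (auto simp: mex_pair split: if_splits)
    have "x3 = 0" using x3 \<open>x2 = 1\<close> by (simp add: mex_singleton)
    then have "x4 \<noteq> 0" using x4 by (auto simp: mex_triple)
    then have "x6 = 1" "y3 \<noteq> 1" using x5 x6 no2 by (auto simp: mex_singleton mex_pair split: if_splits)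
    then have "g = 0" using x7 no2 by (auto simp: mex_singleton mex_pair split: if_splits)
    then have "y2 \<noteq> 1" using x4 \<open>x3 = 0\<close> no2 by (auto simp: mex_triple)
    then show False
      using y2 y3 \<open>y1 = 2\<close> \<open>y3 \<noteq> 1\<close> \<open>k \<noteq> r\<close> \<open>r = 1\<close> by (auto simp: mex_pair split: if_splits)
  qed
qed

lemma finite_opts: "finite (opts n)"
proof -
  have "opts n \<subseteq> {n - 1, n div 2, n div 3}"
    unfolding opts_def by auto
  then show ?thesis
    by (rule finite_subset) simp
qed

lemma SG_option_neq: "w \<in> opts n \<Longrightarrow> SG w \<noteq> SG n"
  using mex_notin[of "SG ` opts n"] finite_opts SG.simps[of n] by force

lemma SG_Suc_neq: "n = m + 1 \<Longrightarrow> SG n \<noteq> SG m"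
  by (rule SG_option_neq[symmetric]) (simp add: opts_def)

lemma SG_eq_mex_opts:
  assumes "n = m + 1"
  shows "SG n = mex ({SG m} \<union> (if 2 dvd n then {SG (n div 2)} else {})
                           \<union> (if 3 dvd n then {SG (n div 3)} else {}))"
proof -
  have "opts n = {m} \<union> (if 2 dvd n then {n div 2} else {}) \<union> (if 3 dvd n then {n div 3} else {})"
    using assms unfolding opts_def by auto
  then show ?thesis
    using SG.simps[of n] by (simp add: image_Un)
qed

lemma SG_coprime_6:
  assumes "n = m + 1" and "odd n" and "\<not> 3 dvd n"
  shows "SG n = mex {SG m}"
  using SG_eq_mex_opts[OF assms(1)] assms(2,3) by simp

lemma SG_even_coprime_3:
  assumes "n = m + 1" and "n = 2 * h" and "\<not> 3 dvd n"
  shows "SG n = mex {SG m, SG h}"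
proof -
  have "2 dvd n" and "n div 2 = h"
    using assms(2) by simp_all
  then show ?thesis
    using SG_eq_mex_opts[OF assms(1)] assms(3) by (simp add: insert_commute)
qed

lemma SG_odd_dvd_3:
  assumes "n = m + 1" and "odd n" and "n = 3 * t"
  shows "SG n = mex {SG m, SG t}"
proof -
  have "3 dvd n" and "n div 3 = t"
    using assms(3) by simp_all
  then show ?thesis
    using SG_eq_mex_opts[OF assms(1)] assms(2) by (simp add: insert_commute)
qed

lemma SG_dvd_6:
  assumes "n = m + 1" and "n = 2 * h" and "n = 3 * t"
  shows "SG n = mex {SG m, SG h, SG t}"
proof -
  have "2 dvd n" and "n div 2 = h"
    using assms(2) by simp_all
  moreover have "3 dvd n" and "n div 3 = t"
    using assms(3) by simp_all
  ultimately show ?thesis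
    using SG_eq_mex_opts[OF assms(1)] by (simp add: insert_commute)
qed

lemma SG_three: "SG 3 = 2"
proof -
  have "SG 0 = 0"
    using SG.simps[of 0] by (simp add: opts_def mex_def)
  moreover have "SG 1 = mex {SG 0}"
    by (rule SG_coprime_6) auto
  moreover have "SG 2 = mex {SG 1, SG 1}"
    by (rule SG_even_coprime_3) auto
  moreover have "SG 3 = mex {SG 2, SG 1}"
    by (rule SG_odd_dvd_3) auto
  ultimately show ?thesis
    by (simp add: mex_singleton mex_pair)
qed

lemma two_in_SG_window: "2 \<in> SG ` {36 * B + 14 .. 36 * B + 21}"
proof -
  have "SG (18*B+7) = mex {SG (18*B+6)}"
    by (rule SG_coprime_6) presburger+
  then have "SG (18*B+7) \<le> 1"
    by (simp add: mex_singleton)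
  moreover have "SG (9*B+5) \<noteq> SG (9*B+4)"
    by (rule SG_Suc_neq) simp
  moreover have "SG (18*B+8) = mex {SG (18*B+7), SG (9*B+4)}"
    by (rule SG_even_coprime_3) presburger+
  moreover have "SG (18*B+9) = mex {SG (18*B+8), SG (6*B+3)}"
    by (rule SG_odd_dvd_3) presburger+
  moreover have "SG (18*B+10) = mex {SG (18*B+9), SG (9*B+5)}"
    by (rule SG_even_coprime_3) presburger+
  moreover have "SG (36*B+14) = mex {SG (36*B+13), SG (18*B+7)}"
    by (rule SG_even_coprime_3) presburger+
  moreover have "SG (36*B+15) = mex {SG (36*B+14), SG (12*B+5)}"
    by (rule SG_odd_dvd_3) presburger+
  moreover have "SG (36*B+16) = mex {SG (36*B+15), SG (18*B+8)}"
    by (rule SG_even_coprime_3) presburger+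
  moreover have "SG (36*B+17) = mex {SG (36*B+16)}"
    by (rule SG_coprime_6) presburger+
  moreover have "SG (36*B+18) = mex {SG (36*B+17), SG (18*B+9), SG (12*B+6)}"
    by (rule SG_dvd_6) presburger+
  moreover have "SG (36*B+19) = mex {SG (36*B+18)}"
    by (rule SG_coprime_6) presburger+
  moreover have "SG (36*B+20) = mex {SG (36*B+19), SG (18*B+10)}"
    by (rule SG_even_coprime_3) presburger+
  moreover have "SG (12*B+7) = mex {SG (12*B+6)}"
    by (rule SG_coprime_6) presburger+
  moreover have "SG (36*B+21) = mex {SG (36*B+20), SG (12*B+7)}"
    by (rule SG_odd_dvd_3) presburger+
  ultimately have "2 \<in> SG ` {36*B+14, 36*B+15, 36*B+16, 36*B+17, 36*B+18, 36*B+19, 36*B+20, 36*B+21}"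
    using mex_window_contains_two by simp
  then show ?thesis
    by (rule subsetD[OF image_mono, rotated]) auto
qed

theorem mainTheorem6:
  fixes n :: nat
  assumes "n > 3"
  shows "\<exists>i::nat. 1 \<le> i \<and> i \<le> 49 \<and> i \<le> n \<and> SG (n - i) = 2"
proof (cases "n \<le> 52")
  case True
  then show ?thesis
    using assms SG_three by (intro exI[of _ "n - 3"]) auto
next
  case False
  define B where "B = (n - 28) div 36"
  obtain m where "36 * B + 14 \<le> m" "m \<le> 36 * B + 21" "SG m = 2"
    using two_in_SG_window[of B] by auto
  moreover have "n - 49 \<le> 36 * B + 14" "36 * B + 21 < n"
    using False unfolding B_def by linarith+
  ultimately show ?thesis
    by (intro exI[of _ "n - m"]) auto
qed

end
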